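(* Let $\Theta_0 \subseteq \mathbb{R}^q$, let $\theta_0 \in \Theta_0$, and for every $\theta \in \mathbb{R}^q$ let $g_\theta : \mathcal{X} \to \mathbb{R}$ be a predictor such that $\theta \mapsto g_\theta(x)$ is twice differentiable for every $x \in \mathcal{X} \subseteq \mathbb{R}^d$. Let $\mathcal{C}_\mathrm{T} \subseteq \mathbb{R}^q$ be a convex set containing $0$ with $\sup_{\delta \in \mathcal{C}_\mathrm{T}} \|\delta\|_2 \leq R$. Let $(x_1,y_1),\dots,(x_{n_\mathrm{T}},y_{n_\mathrm{T}}) \in \mathcal{X}\times\mathcal{Y}$ be the target samples (with $\mathcal{Y}\subseteq\mathbb{R}$), and let $\ell:\mathbb{R}\times\mathcal{Y}\to\mathbb{R}$ be such that $\ell(\cdot,y)$ is convex and $1$-Lipschitz for every $y \in \mathcal{Y}$. For a predictor $h$ write $\mathcal{L}^{g^\ast}(h) = \frac{1}{n_\mathrm{T}}\sum_{i=1}^{n_\mathrm{T}} \ell(h(x_i), y_i)$ (the empirical loss on the target samples, which are labeled by a target task $g^\ast$). Assume there are $\beta, L \geq 0$ with \[ \sup_{\theta\in\Theta_0}\sup_{\delta \in \mathcal{C}_\mathrm{T}} \frac{1}{n_\mathrm{T}}\sum_{i=1}^{n_\mathrm{T}} \|\nabla_\theta^2 g_{\theta+\delta}(x_i)\|_2^2 \leq \beta^2 \quad\text{and}\quad \sup_{\theta \in \Theta_0}\frac{1}{n_\mathrm{T}}\sum_{i=1}^{n_\mathrm{T}} \|\nabla_\theta g_\theta(x_i)\|_2^2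 \leq L^2, \] where $\|\cdot\|_2$ on Hessians is the spectral norm. Run projected gradient descent for $T_\mathrm{PGD}$ iterations on $\delta \mapsto \mathcal{L}^{g^\ast}(g_{\theta_0+\delta})$ over $\mathcal{C}_\mathrm{T}$: $\delta_0 = 0$, $\delta_{s+1} = \Pi_{\mathcal{C}_\mathrm{T}}\big(\delta_s - \eta \nabla_\delta \mathcal{L}^{g^\ast}(g_{\theta_0+\delta_s})\big)$, where $\Pi_{\mathcal{C}_\mathrm{T}}$ is Euclidean projection onto $\mathcal{C}_\mathrm{T}$ and the step size is \[ \eta = \frac{1}{\sqrt{T_\mathrm{PGD}}}\left(\frac{R}{\sqrt{L^2 + \beta^2 R^2}}\right). \] Let $g_s = g_{\theta_0 + \delta_s}$ for $s = 0,\dots,T_\mathrm{PGD}$ (so $g_0 = g_{\theta_0}$). Then for every $g \in \{g_{\theta_0+\delta} : \delta \in \mathcal{C}_\mathrm{T}\}$, \[ \min_{s}\mathcal{L}^{g^\ast}(g_s) - \mathcal{L}^{g^\ast}(g) \leq \beta R^2 + R\sqrt{\frac{L^2 + \beta^2R^2}{T_\mathrm{PGD}}}. \]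
   Context: This is the optimization (fine-tuning) step of a meta-learning procedure: a representation/initialization $\theta_0$ has been learned from source tasks, and at target time one fine-tunes by searching for a perturbation $\delta$ in the feasible set $\mathcal{C}_\mathrm{T}$ using projected gradient descent on the empirical target loss. *)

theory Defs
  imports "HOL-Analysis.Analysis"
begin

definition emp_loss ::
  "(real \<Rightarrow> real \<Rightarrow> real) \<Rightarrow> nat \<Rightarrow> (nat \<Rightarrow> 'x) \<Rightarrow> (nat \<Rightarrow> real) \<Rightarrow> ('x \<Rightarrow> real) \<Rightarrow> real"
  where "emp_loss loss n xs ys h = (1 / real n) * (\<Sum>i<n. loss (h (xs i)) (ys i))"

definition is_projection :: "('a::real_normed_vector) set \<Rightarrow> ('a \<Rightarrow> 'a) \<Rightarrow> bool"
  where "is_projection C P \<longleftrightarrow> (\<forall>v. P v \<in> C \<and> (\<forall>c\<in>C. dist v (P v) \<le> dist v c))"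

primrec pgd :: "('a::real_vector \<Rightarrow> 'a) \<Rightarrow> real \<Rightarrow> ('a \<Rightarrow> 'a) \<Rightarrow> nat \<Rightarrow> 'a"
  where "pgd P eta grad 0 = 0"
  | "pgd P eta grad (Suc s) = P (pgd P eta grad s - eta *\<^sub>R grad (pgd P eta grad s))"

text \<open>(Sub)gradient w.r.t. delta of delta \<mapsto> emp_loss (g (theta0 + delta)), via the chain rule,
  with dloss z y a (sub)derivative of loss(., y) at z and Dg theta x the gradient of theta \<mapsto> g theta x.\<close>
definition emp_grad ::
  "(real \<Rightarrow> real \<Rightarrow> real) \<Rightarrow> nat \<Rightarrow> (nat \<Rightarrow> 'x) \<Rightarrow> (nat \<Rightarrow> real) \<Rightarrow>
   ('q::real_vector \<Rightarrow> 'x \<Rightarrow> real) \<Rightarrow> ('q \<Rightarrow> 'x \<Rightarrow> 'q) \<Rightarrow> 'q \<Rightarrow> 'q \<Rightarrow> 'q"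
  where "emp_grad dloss n xs ys g Dg theta0 delta =
     (1 / real n) *\<^sub>R (\<Sum>i<n. dloss (g (theta0 + delta) (xs i)) (ys i) *\<^sub>R Dg (theta0 + delta) (xs i))"

end

theory Submission
  imports Defs
begin

text \<open>Write \<open>f(\<delta>)\<close> for the empirical loss of \<open>g\<^bsub>\<theta>\<^sub>0+\<delta>\<^esub>\<close> and \<open>G(\<delta>)\<close> for its
  chain-rule gradient. Fixing \<open>a\<close> and linearising each loss at \<open>g\<^bsub>\<theta>\<^sub>0+a\<^esub>(x\<^sub>i)\<close>, with slopes
  in \<open>[-1,1]\<close> by 1-Lipschitzness, bounds \<open>f(b) - f(a)\<close> below by the increment of a weighted average of
  the \<open>g\<^bsub>\<theta>\<^sub>0+\<delta>\<^esub>(x\<^sub>i)\<close>, whose gradient is \<open>\<beta>\<close>-Lipschitz on \<open>C\<close> by the Hessian bound. Hence \<open>f\<close> is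
  \<open>\<beta>\<close>-weakly convex along \<open>C\<close>: \<open>f(b) \<ge> f(a) + \<langle>G(a), b - a\<rangle> - \<beta>/2 \<parallel>b - a\<parallel>\<^sup>2\<close>, and
  \<open>\<parallel>G(a)\<parallel> \<le> L + \<beta>\<parallel>a\<parallel>\<close>.

  If every iterate had excess loss above \<open>\<beta>R\<^sup>2 + \<epsilon>\<close> with \<open>\<epsilon> = R\<surd>((L\<^sup>2 + \<beta>\<^sup>2R\<^sup>2)/T)\<close>, the usual
  expansion of \<open>\<parallel>\<delta>\<^sub>s\<^sub>+\<^sub>1 - b\<parallel>\<^sup>2\<close> (the projection being non-expansive) would decrease
  \<open>\<parallel>\<delta>\<^sub>s - b\<parallel>\<^sup>2\<close> by at least \<open>R\<^sup>2/T\<close> per step, the surplus \<open>\<beta>R\<^sup>2\<close> absorbing both the weak convexity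
  defect and the cross term of \<open>\<parallel>G\<parallel>\<^sup>2\<close>. Starting from \<open>\<parallel>b\<parallel>\<^sup>2 \<le> R\<^sup>2\<close> this forces \<open>\<delta>\<^sub>T = b\<close>,
  contradicting the excess loss at step \<open>T\<close>.\<close>

section \<open>Euclidean projections onto convex sets\<close>

lemma is_projection_closed:
  assumes "is_projection C P"
  shows "closed C"
proof -
  have "v \<in> C" if v: "v \<in> closure C" for v
  proof -
    have "dist v (P v) < e" if "e > 0" for e
    proof -
      obtain c where "c \<in> C" "dist v c < e"
        using closure_approachableD[OF v \<open>e > 0\<close>] by blast
      then show ?thesis
        using assms unfolding is_projection_def by (meson le_less_trans)
    qed
    then have "P v = v"
      by (metis less_irrefl zero_less_dist_iff)
    then show ?thesis
      using assms unfolding is_projection_def by metis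
  qed
  then show ?thesis
    using closure_subset_eq by blast
qed

lemma is_projection_eq_closest_point:
  assumes "is_projection C P" "convex C"
  shows "P v = closest_point C v"
  using assms is_projection_closed[OF assms(1)]
  by (intro closest_point_unique) (auto simp: is_projection_def)

lemma is_projection_nonexpansive:
  fixes C :: "'a::euclidean_space set"
  assumes "is_projection C P" "convex C" "b \<in> C"
  shows "dist (P v) b \<le> dist v b"
  using closest_point_lipschitz[OF assms(2) is_projection_closed[OF assms(1)], of v b]
  by (metis assms closest_point_self empty_iff is_projection_eq_closest_point)

lemma pgd_in_set:
  assumes "is_projection C P" "0 \<in> C"
  shows "pgd P eta G s \<in> C"
  using assms by (cases s) (auto simp: is_projection_def)

section \<open>Projected gradient descent on weakly convex objectives\<close>

lemma projected_gradient_step_dist_sq_le: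
  fixes f :: "'a::euclidean_space \<Rightarrow> real"
  assumes "is_projection C P" "convex C" "b \<in> C" "norm x \<le> R"
    and weak: "f b \<ge> f x + G \<bullet> (b - x) - beta / 2 * (norm (b - x))\<^sup>2"
    and grad: "norm G \<le> L + beta * norm x"
    and gap: "f x - f b \<ge> beta * R\<^sup>2 + eps"
    and room: "(norm (x - b))\<^sup>2 + 2 * eta * L * norm x \<le> 2 * R\<^sup>2"
    and "eta \<ge> 0" "beta \<ge> 0" "L \<ge> 0"
  shows "(norm (P (x - eta *\<^sub>R G) - b))\<^sup>2
    \<le> (norm (x - b))\<^sup>2 - 2 * eta * eps + eta\<^sup>2 * (L\<^sup>2 + beta\<^sup>2 * R\<^sup>2)"
proof -
  define D where "D = (norm (x - b))\<^sup>2"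
  have descent: "G \<bullet> (x - b) \<ge> beta * R\<^sup>2 + eps - beta / 2 * D"
    using weak gap by (simp add: D_def inner_diff_right norm_minus_commute)
  have "(norm G)\<^sup>2 \<le> (L + beta * norm x)\<^sup>2"
    using grad by (simp add: power_mono)
  also have "\<dots> \<le> L\<^sup>2 + beta\<^sup>2 * R\<^sup>2 + 2 * L * beta * norm x"
    using \<open>norm x \<le> R\<close> \<open>beta \<ge> 0\<close> by (simp add: power2_sum power_mult_distrib mult_left_mono power_mono)
  finally have grad_sq: "(norm G)\<^sup>2 \<le> L\<^sup>2 + beta\<^sup>2 * R\<^sup>2 + 2 * L * beta * norm x" .
  have "(norm (P (x - eta *\<^sub>R G) - b))\<^sup>2 \<le> (norm (x - eta *\<^sub>R G - b))\<^sup>2"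
    using is_projection_nonexpansive[OF assms(1-3)] by (simp add: dist_norm power_mono)
  also have "\<dots> = D - 2 * eta * (G \<bullet> (x - b)) + eta\<^sup>2 * (norm G)\<^sup>2"
    unfolding D_def power2_norm_eq_inner
    by (simp add: inner_diff_left inner_diff_right inner_commute algebra_simps power2_eq_square)
  also have "\<dots> \<le> D - 2 * eta * (beta * R\<^sup>2 + eps - beta / 2 * D)
      + eta\<^sup>2 * (L\<^sup>2 + beta\<^sup>2 * R\<^sup>2 + 2 * L * beta * norm x)"
    using descent grad_sq \<open>eta \<ge> 0\<close> by (intro add_mono diff_mono mult_left_mono) auto
  also have "\<dots> = D - 2 * eta * eps + eta\<^sup>2 * (L\<^sup>2 + beta\<^sup>2 * R\<^sup>2)
      - eta * beta * (2 * R\<^sup>2 - D - 2 * eta * L * norm x)"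
    by (simp add: algebra_simps power2_eq_square)
  also have "\<dots> \<le> D - 2 * eta * eps + eta\<^sup>2 * (L\<^sup>2 + beta\<^sup>2 * R\<^sup>2)"
    using room \<open>eta \<ge> 0\<close> \<open>beta \<ge> 0\<close> by (simp add: D_def)
  finally show ?thesis
    unfolding D_def .
qed

lemma pgd_dist_sq_le:
  fixes f :: "'a::euclidean_space \<Rightarrow> real"
  assumes "is_projection C P" "convex C" "0 \<in> C" "b \<in> C"
    and bounded: "\<And>x. x \<in> C \<Longrightarrow> norm x \<le> R"
    and weak: "\<And>x. x \<in> C \<Longrightarrow> f b \<ge> f x + G x \<bullet> (b - x) - beta / 2 * (norm (b - x))\<^sup>2"
    and grad: "\<And>x. x \<in> C \<Longrightarrow> norm (G x) \<le> L + beta * norm x"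
    and gap: "\<And>s. s < T \<Longrightarrow> f (pgd P eta G s) - f b \<ge> beta * R\<^sup>2 + eps"
    and step_size: "eta * L \<le> R / sqrt (real T)"
    and decrease: "2 * eta * eps - eta\<^sup>2 * (L\<^sup>2 + beta\<^sup>2 * R\<^sup>2) = R\<^sup>2 / real T"
    and "eta \<ge> 0" "beta \<ge> 0" "L \<ge> 0"
  shows "s \<le> T \<Longrightarrow> (norm (pgd P eta G s - b))\<^sup>2 \<le> R\<^sup>2 - real s * R\<^sup>2 / real T"
proof (induction s)
  case 0
  show ?case
    using bounded[OF \<open>b \<in> C\<close>] by (simp add: power_mono)
next
  case (Suc s)
  let ?x = "pgd P eta G s"
  have x: "?x \<in> C"
    using pgd_in_set[OF assms(1,3)] .
  have R: "R \<ge> 0"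
    using bounded[OF \<open>0 \<in> C\<close>] by simp
  have dist_le: "(norm (?x - b))\<^sup>2 \<le> R\<^sup>2 - real s * R\<^sup>2 / real T"
    using Suc by simp
  have room: "(norm (?x - b))\<^sup>2 + 2 * eta * L * norm ?x \<le> 2 * R\<^sup>2"
  proof (cases s)
    case 0
    then show ?thesis
      using dist_le by simp (use zero_le_power2[of R] in linarith)
  next
    case (Suc s')
    have "R\<^sup>2 \<le> real s * R\<^sup>2"
      using Suc mult_right_mono[of 1 "real s" "R\<^sup>2"] by simp
    then have "R\<^sup>2 / real T \<le> real s * R\<^sup>2 / real T"
      by (simp add: divide_right_mono)
    moreover have "eta * L * norm ?x \<le> R / sqrt (real T) * R"
      using step_size bounded[OF x] R \<open>eta \<ge> 0\<close> \<open>L \<ge> 0\<close> by (intro mult_mono) auto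
    moreover have "2 * (R / sqrt (real T) * R) \<le> R\<^sup>2 + R\<^sup>2 / real T"
      using sum_squares_bound[of R "R / sqrt (real T)"]
      by (simp add: power_divide)
    ultimately show ?thesis
      using dist_le by linarith
  qed
  have "(norm (pgd P eta G (Suc s) - b))\<^sup>2
      \<le> (norm (?x - b))\<^sup>2 - 2 * eta * eps + eta\<^sup>2 * (L\<^sup>2 + beta\<^sup>2 * R\<^sup>2)"
    using projected_gradient_step_dist_sq_le[OF assms(1,2,4) bounded[OF x] weak[OF x] grad[OF x]
        gap room \<open>eta \<ge> 0\<close> \<open>beta \<ge> 0\<close> \<open>L \<ge> 0\<close>] Suc.prems
    by simp
  also have "\<dots> \<le> R\<^sup>2 - real (Suc s) * R\<^sup>2 / real T"
    using dist_le decrease by (simp add: add_divide_distrib algebra_simps)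
  finally show ?case .
qed

theorem pgd_min_gap_le:
  fixes f :: "'a::euclidean_space \<Rightarrow> real"
  assumes "is_projection C P" "convex C" "0 \<in> C" "b \<in> C"
    and bounded: "\<And>x. x \<in> C \<Longrightarrow> norm x \<le> R"
    and weak: "\<And>x. x \<in> C \<Longrightarrow> f b \<ge> f x + G x \<bullet> (b - x) - beta / 2 * (norm (b - x))\<^sup>2"
    and grad: "\<And>x. x \<in> C \<Longrightarrow> norm (G x) \<le> L + beta * norm x"
    and "beta \<ge> 0" "L \<ge> 0" "T > 0"
  shows "Min ((\<lambda>s. f (pgd P (1 / sqrt (real T) * (R / sqrt (L\<^sup>2 + beta\<^sup>2 * R\<^sup>2))) G s)) ` {0..T})
      - f b \<le> beta * R\<^sup>2 + R * sqrt ((L\<^sup>2 + beta\<^sup>2 * R\<^sup>2) / real T)"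
proof -
  define M where "M = sqrt (L\<^sup>2 + beta\<^sup>2 * R\<^sup>2)"
  define eta where "eta = 1 / sqrt (real T) * (R / M)"
  define eps where "eps = R * M / sqrt (real T)"
  let ?x = "pgd P eta G"
  have R: "R \<ge> 0"
    using bounded[OF \<open>0 \<in> C\<close>] by simp
  have M: "M \<ge> 0" "M\<^sup>2 = L\<^sup>2 + beta\<^sup>2 * R\<^sup>2"
    by (simp_all add: M_def)
  have Min_le: "Min ((\<lambda>s. f (?x s)) ` {0..T}) \<le> f (?x s)" if "s \<le> T" for s
    using that by (intro Min_le) auto
  have "Min ((\<lambda>s. f (?x s)) ` {0..T}) - f b \<le> beta * R\<^sup>2 + eps"
  proof (cases "R = 0 \<or> M = 0")
    case True
    \<comment> \<open>The step size degenerates to \<open>eta = 0\<close> (division by zero), but now \<open>L * R = 0\<close> and the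
      initial iterate \<open>0\<close> already satisfies the bound.\<close>
    then have "L * R = 0"
      using M by (auto simp: power2_eq_square add_nonneg_eq_0_iff)
    moreover have "f b \<ge> f 0 + G 0 \<bullet> b - beta / 2 * (norm b)\<^sup>2"
      using weak[OF \<open>0 \<in> C\<close>] by simp
    moreover have "G 0 \<bullet> b \<ge> - (L * R)"
      using norm_cauchy_schwarz[of "- G 0" b] grad[OF \<open>0 \<in> C\<close>] bounded[OF \<open>b \<in> C\<close>]
        \<open>L \<ge> 0\<close> mult_mono[of "norm (G 0)" L "norm b" R]
      by simp
    moreover have "beta * (norm b)\<^sup>2 \<le> beta * R\<^sup>2"
      using bounded[OF \<open>b \<in> C\<close>] \<open>beta \<ge> 0\<close> by (simp add: mult_left_mono power_mono)
    moreover have "eps \<ge> 0" "beta * R\<^sup>2 \<ge> 0"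
      using R M \<open>beta \<ge> 0\<close> by (simp_all add: eps_def)
    moreover have "Min ((\<lambda>s. f (?x s)) ` {0..T}) \<le> f 0"
      using Min_le[of 0] by simp
    ultimately show ?thesis
      by linarith
  next
    case False
    then have "R > 0" "M > 0"
      using R M by auto
    have "L \<le> M"
      unfolding M_def by (rule real_le_rsqrt) simp
    then have "L / M * (R / sqrt (real T)) \<le> 1 * (R / sqrt (real T))"
      using \<open>M > 0\<close> \<open>R > 0\<close> by (intro mult_right_mono) auto
    then have step_size: "eta * L \<le> R / sqrt (real T)"
      by (simp add: eta_def mult.commute)
    have "eta * eps = R\<^sup>2 / real T" "eta\<^sup>2 * M\<^sup>2 = R\<^sup>2 / real T"
      using \<open>M > 0\<close> by (simp_all add: eta_def eps_def power2_eq_square)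
    then have decrease: "2 * eta * eps - eta\<^sup>2 * (L\<^sup>2 + beta\<^sup>2 * R\<^sup>2) = R\<^sup>2 / real T"
      by (simp add: M(2))
    have "eta \<ge> 0" "beta * R\<^sup>2 + eps \<ge> 0"
      using \<open>R > 0\<close> \<open>M > 0\<close> \<open>beta \<ge> 0\<close> by (simp_all add: eta_def eps_def)
    show ?thesis
    proof (rule ccontr)
      assume "\<not> ?thesis"
      then have gap: "f (?x s) - f b > beta * R\<^sup>2 + eps" if "s \<le> T" for s
        using Min_le[OF that] by linarith
      have "(norm (?x T - b))\<^sup>2 \<le> R\<^sup>2 - real T * R\<^sup>2 / real T"
        using gap by (intro pgd_dist_sq_le[OF assms(1-7) _ step_size decrease
            \<open>eta \<ge> 0\<close> \<open>beta \<ge> 0\<close> \<open>L \<ge> 0\<close>]) (auto simp: less_imp_le)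
      then have "?x T = b"
        using \<open>T > 0\<close> by simp
      then show False
        using gap[of T] \<open>beta * R\<^sup>2 + eps \<ge> 0\<close> by simp
    qed
  qed
  moreover have "eps = R * sqrt ((L\<^sup>2 + beta\<^sup>2 * R\<^sup>2) / real T)"
    by (simp add: eps_def M_def real_sqrt_divide)
  ultimately show ?thesis
    by (simp add: eta_def M_def)
qed

section \<open>Lipschitz gradients and weighted averages\<close>

lemma has_derivative_shift:
  assumes "(f has_derivative f') (at (c + x))"
  shows "((\<lambda>x. f (c + x)) has_derivative f') (at x)"
  using has_derivative_compose[OF shift_has_derivative_id assms] by simp

lemma lower_quadratic_bound_of_lipschitz_gradient:
  fixes f :: "'a::real_inner \<Rightarrow> real"
  assumes "convex C" "a \<in> C" "b \<in> C"
    and deriv: "\<And>x. x \<in> C \<Longrightarrow> (f has_derivative (\<lambda>h. F x \<bullet> h)) (at x)"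
    and lip: "\<And>x y. x \<in> C \<Longrightarrow> y \<in> C \<Longrightarrow> norm (F x - F y) \<le> beta * norm (x - y)"
  shows "f b \<ge> f a + F a \<bullet> (b - a) - beta / 2 * (norm (b - a))\<^sup>2"
proof -
  define d where "d = b - a"
  define phi where "phi t = f (a + t *\<^sub>R d) - t * (F a \<bullet> d) + beta * (norm d)\<^sup>2 * t\<^sup>2 / 2" for t
  have "phi 0 \<le> phi 1"
  proof (rule DERIV_nonneg_imp_nondecreasing[of 0 1])
    fix t :: real
    assume t: "0 \<le> t" "t \<le> 1"
    let ?x = "a + t *\<^sub>R d"
    have x: "?x \<in> C"
      using convexD_alt[OF assms(1-3) t] by (simp add: d_def algebra_simps)
    have "((\<lambda>t. f (a + t *\<^sub>R d)) has_real_derivative F ?x \<bullet> d) (at t)"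
      by (rule has_derivative_imp_has_field_derivative
          [OF has_derivative_compose[of "\<lambda>t. a + t *\<^sub>R d", OF _ deriv[OF x]]])
        (auto intro!: derivative_eq_intros)
    then have "(phi has_real_derivative F ?x \<bullet> d - F a \<bullet> d + beta * (norm d)\<^sup>2 * t) (at t)"
      unfolding phi_def[abs_def] by (auto intro!: derivative_eq_intros)
    moreover have "(F a - F ?x) \<bullet> d \<le> beta * (norm d)\<^sup>2 * t"
    proof -
      have "(F a - F ?x) \<bullet> d \<le> norm (F a - F ?x) * norm d"
        by (rule norm_cauchy_schwarz)
      also have "\<dots> \<le> beta * norm (a - ?x) * norm d"
        using lip[OF assms(2) x] by (simp add: mult_right_mono)
      finally show ?thesis
        using t by (simp add: power2_eq_square mult_ac)
    qed
    ultimately show "\<exists>y. (phi has_real_derivative y) (at t) \<and> 0 \<le> y"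
      by (auto simp: inner_diff_left)
  qed simp
  then show ?thesis
    unfolding phi_def d_def by (simp add: algebra_simps)
qed

lemma mean_le_of_mean_square_le:
  fixes a :: "nat \<Rightarrow> real"
  assumes "(1 / real n) * (\<Sum>i<n. (a i)\<^sup>2) \<le> B\<^sup>2" "B \<ge> 0"
  shows "(1 / real n) * (\<Sum>i<n. a i) \<le> B"
proof (cases "n = 0")
  case False
  have "((1 / real n) * (\<Sum>i<n. a i))\<^sup>2 \<le> (1 / real n) * (\<Sum>i<n. (a i)\<^sup>2)"
    using sum_squared_le_sum_of_squares[of a "{..<n}"] False
    by (simp add: power_mult_distrib power2_eq_square field_simps)
  also have "\<dots> \<le> B\<^sup>2"
    by (fact assms(1))
  finally show ?thesis
    using \<open>B \<ge> 0\<close> by (rule power2_le_imp_le)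
qed (simp add: assms(2))

lemma abs_subgradient_le:
  fixes l :: "real \<Rightarrow> real"
  assumes lip: "\<And>z z'. \<bar>l z - l z'\<bar> \<le> K * \<bar>z - z'\<bar>"
    and subgrad: "\<And>w. l w \<ge> l z + d * (w - z)"
  shows "\<bar>d\<bar> \<le> K"
  using subgrad[of "z + 1"] subgrad[of "z - 1"] lip[of "z + 1" z] lip[of "z - 1" z]
  by (simp add: abs_le_iff)

lemma norm_mean_weighted_le:
  fixes v :: "nat \<Rightarrow> 'a::real_normed_vector"
  assumes "\<And>i. i < n \<Longrightarrow> \<bar>w i\<bar> \<le> 1"
  shows "norm ((1 / real n) *\<^sub>R (\<Sum>i<n. w i *\<^sub>R v i)) \<le> (1 / real n) * (\<Sum>i<n. norm (v i))"
proof -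
  have "norm (\<Sum>i<n. w i *\<^sub>R v i) \<le> (\<Sum>i<n. norm (v i))"
    using assms by (intro order_trans[OF norm_sum] sum_mono) (simp add: mult_left_le_one_le)
  then show ?thesis
    by (simp add: divide_right_mono)
qed

lemma mean_weighted_lipschitz:
  fixes F :: "nat \<Rightarrow> 'a::{real_normed_vector, perfect_space} \<Rightarrow> 'b::real_normed_vector"
  assumes "convex C" "x \<in> C" "y \<in> C"
    and deriv: "\<And>i z. i < n \<Longrightarrow> z \<in> C \<Longrightarrow> (F i has_derivative F' i z) (at z)"
    and mean_onorm: "\<And>z. z \<in> C \<Longrightarrow> (1 / real n) * (\<Sum>i<n. onorm (F' i z)) \<le> beta"
    and weights: "\<And>i. i < n \<Longrightarrow> \<bar>w i\<bar> \<le> 1"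
  shows "norm ((1 / real n) *\<^sub>R (\<Sum>i<n. w i *\<^sub>R F i x) - (1 / real n) *\<^sub>R (\<Sum>i<n. w i *\<^sub>R F i y))
    \<le> beta * norm (x - y)"
proof (rule differentiable_bound[OF \<open>convex C\<close> _ _ \<open>x \<in> C\<close> \<open>y \<in> C\<close>])
  fix z
  assume z: "z \<in> C"
  show "((\<lambda>x. (1 / real n) *\<^sub>R (\<Sum>i<n. w i *\<^sub>R F i x)) has_derivative
      (\<lambda>h. (1 / real n) *\<^sub>R (\<Sum>i<n. w i *\<^sub>R F' i z h))) (at z within C)"
    using deriv[OF _ z]
    by (intro has_derivative_at_withinI[OF has_derivative_scaleR_right] has_derivative_sum
        has_derivative_scaleR_right) auto
  show "onorm (\<lambda>h. (1 / real n) *\<^sub>R (\<Sum>i<n. w i *\<^sub>R F' i z h)) \<le> beta"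
  proof (rule onorm_le)
    fix h
    have "norm ((1 / real n) *\<^sub>R (\<Sum>i<n. w i *\<^sub>R F' i z h)) \<le> (1 / real n) * (\<Sum>i<n. norm (F' i z h))"
      by (rule norm_mean_weighted_le[OF weights])
    also have "\<dots> \<le> (1 / real n) * (\<Sum>i<n. onorm (F' i z) * norm h)"
      using deriv[OF _ z] by (intro mult_left_mono sum_mono onorm has_derivative_bounded_linear) auto
    also have "\<dots> = (1 / real n) * (\<Sum>i<n. onorm (F' i z)) * norm h"
      by (simp add: sum_distrib_right)
    also have "\<dots> \<le> beta * norm h"
      using mean_onorm[OF z] by (rule mult_right_mono) simp
    finally show "norm ((1 / real n) *\<^sub>R (\<Sum>i<n. w i *\<^sub>R F' i z h)) \<le> beta * norm h" .
  qed
qed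

section \<open>The empirical target loss\<close>

lemma emp_loss_weakly_convex:
  fixes g :: "'q::euclidean_space \<Rightarrow> 'x \<Rightarrow> real" and Dg :: "'q \<Rightarrow> 'x \<Rightarrow> 'q"
  assumes "convex C" "a \<in> C" "b \<in> C"
    and grad_g: "\<And>t i. i < n \<Longrightarrow> ((\<lambda>t. g t (xs i)) has_derivative (\<lambda>h. Dg t (xs i) \<bullet> h)) (at t)"
    and hess_g: "\<And>t i. i < n \<Longrightarrow> ((\<lambda>t. Dg t (xs i)) has_derivative H t (xs i)) (at t)"
    and mean_hess: "\<And>delta. delta \<in> C \<Longrightarrow>
      (1 / real n) * (\<Sum>i<n. onorm (H (theta0 + delta) (xs i))) \<le> beta"
    and subgrad: "\<And>i z w. i < n \<Longrightarrow> loss w (ys i) \<ge> loss z (ys i) + dloss z (ys i) * (w - z)"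
    and dloss_le: "\<And>i z. i < n \<Longrightarrow> \<bar>dloss z (ys i)\<bar> \<le> 1"
  shows "emp_loss loss n xs ys (g (theta0 + b))
    \<ge> emp_loss loss n xs ys (g (theta0 + a)) + emp_grad dloss n xs ys g Dg theta0 a \<bullet> (b - a)
      - beta / 2 * (norm (b - a))\<^sup>2"
proof -
  define w where "w i = dloss (g (theta0 + a) (xs i)) (ys i)" for i
  define psi where "psi x = (1 / real n) * (\<Sum>i<n. w i * g (theta0 + x) (xs i))" for x
  define F where "F x = (1 / real n) *\<^sub>R (\<Sum>i<n. w i *\<^sub>R Dg (theta0 + x) (xs i))" for x
  have "(psi has_derivative (\<lambda>h. F x \<bullet> h)) (at x)" for x
  proof -
    have "(psi has_derivative (\<lambda>h. (1 / real n) * (\<Sum>i<n. w i * (Dg (theta0 + x) (xs i) \<bullet> h)))) (at x)"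
      unfolding psi_def[abs_def] using has_derivative_shift[OF grad_g]
      by (intro has_derivative_mult_right has_derivative_sum) auto
    then show ?thesis
      by (simp add: F_def inner_sum_left)
  qed
  moreover have "norm (F x - F y) \<le> beta * norm (x - y)" if "x \<in> C" "y \<in> C" for x y
    unfolding F_def
    using has_derivative_shift[OF hess_g] mean_hess dloss_le
    by (intro mean_weighted_lipschitz[OF \<open>convex C\<close> that]) (auto simp: w_def)
  ultimately have "psi b \<ge> psi a + F a \<bullet> (b - a) - beta / 2 * (norm (b - a))\<^sup>2"
    by (rule lower_quadratic_bound_of_lipschitz_gradient[OF assms(1-3)])
  moreover have "psi b - psi a
      \<le> emp_loss loss n xs ys (g (theta0 + b)) - emp_loss loss n xs ys (g (theta0 + a))"
  proof -
    have "psi b - psi a = (1 / real n) * (\<Sum>i<n. w i * (g (theta0 + b) (xs i) - g (theta0 + a) (xs i)))"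
      by (simp add: psi_def algebra_simps sum_subtractf)
    also have "\<dots> \<le> (1 / real n) *
        (\<Sum>i<n. loss (g (theta0 + b) (xs i)) (ys i) - loss (g (theta0 + a) (xs i)) (ys i))"
      using subgrad by (intro mult_left_mono sum_mono) (auto simp: w_def algebra_simps)
    also have "\<dots> = emp_loss loss n xs ys (g (theta0 + b)) - emp_loss loss n xs ys (g (theta0 + a))"
      by (simp add: emp_loss_def algebra_simps sum_subtractf)
    finally show ?thesis .
  qed
  moreover have "F a = emp_grad dloss n xs ys g Dg theta0 a"
    by (simp add: F_def w_def emp_grad_def)
  ultimately show ?thesis
    by simp
qed

lemma norm_emp_grad_le:
  fixes g :: "'q::euclidean_space \<Rightarrow> 'x \<Rightarrow> real" and Dg :: "'q \<Rightarrow> 'x \<Rightarrow> 'q"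
  assumes "convex C" "0 \<in> C" "a \<in> C"
    and hess_g: "\<And>t i. i < n \<Longrightarrow> ((\<lambda>t. Dg t (xs i)) has_derivative H t (xs i)) (at t)"
    and mean_hess: "\<And>delta. delta \<in> C \<Longrightarrow>
      (1 / real n) * (\<Sum>i<n. onorm (H (theta0 + delta) (xs i))) \<le> beta"
    and mean_grad: "(1 / real n) * (\<Sum>i<n. norm (Dg theta0 (xs i))) \<le> L"
    and dloss_le: "\<And>i z. i < n \<Longrightarrow> \<bar>dloss z (ys i)\<bar> \<le> 1"
  shows "norm (emp_grad dloss n xs ys g Dg theta0 a) \<le> L + beta * norm a"
proof -
  define w where "w i = dloss (g (theta0 + a) (xs i)) (ys i)" for i
  define F where "F x = (1 / real n) *\<^sub>R (\<Sum>i<n. w i *\<^sub>R Dg (theta0 + x) (xs i))" for x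
  have w_le: "\<bar>w i\<bar> \<le> 1" if "i < n" for i
    using dloss_le[OF that] by (simp add: w_def)
  have "norm (F a) \<le> norm (F 0) + norm (F a - F 0)"
    by (rule norm_triangle_sub)
  also have "\<dots> \<le> L + beta * norm (a - 0)"
  proof (rule add_mono)
    show "norm (F 0) \<le> L"
      unfolding F_def
      using norm_mean_weighted_le[of n w "\<lambda>i. Dg theta0 (xs i)", OF w_le] mean_grad by simp
    show "norm (F a - F 0) \<le> beta * norm (a - 0)"
      unfolding F_def
      using has_derivative_shift[OF hess_g] mean_hess w_le
      by (intro mean_weighted_lipschitz[OF assms(1,3,2)]) auto
  qed
  finally show ?thesis
    by (simp add: F_def w_def emp_grad_def)
qed

theorem mainTheorem1:
  fixes g :: "real^'q \<Rightarrow> real^'d \<Rightarrow> real"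
    and Dg :: "real^'q \<Rightarrow> real^'d \<Rightarrow> real^'q"
    and Hg :: "real^'q \<Rightarrow> real^'d \<Rightarrow> real^'q^'q"
    and X :: "(real^'d) set" and Y :: "real set"
    and Theta0 :: "(real^'q) set" and theta0 :: "real^'q"
    and C :: "(real^'q) set" and R :: real
    and P :: "real^'q \<Rightarrow> real^'q"
    and n :: nat and xs :: "nat \<Rightarrow> real^'d" and ys :: "nat \<Rightarrow> real"
    and loss :: "real \<Rightarrow> real \<Rightarrow> real" and dloss :: "real \<Rightarrow> real \<Rightarrow> real"
    and beta L :: real and T :: nat
  assumes theta0_in: "theta0 \<in> Theta0"
    and grad_g: "\<And>theta x. x \<in> X \<Longrightarrow> ((\<lambda>t. g t x) has_derivative (\<lambda>h. Dg theta x \<bullet> h)) (at theta)"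
    and hess_g: "\<And>theta x. x \<in> X \<Longrightarrow> ((\<lambda>t. Dg t x) has_derivative (\<lambda>h. Hg theta x *v h)) (at theta)"
    and C_convex: "convex C" and C_zero: "0 \<in> C"
    and C_bounded: "\<And>delta. delta \<in> C \<Longrightarrow> norm delta \<le> R"
    and P_proj: "is_projection C P"
    and n_pos: "n > 0"
    and samples: "\<And>i. i < n \<Longrightarrow> xs i \<in> X \<and> ys i \<in> Y"
    and loss_convex: "\<And>y. y \<in> Y \<Longrightarrow> convex_on UNIV (\<lambda>z. loss z y)"
    and loss_lipschitz: "\<And>y z z'. y \<in> Y \<Longrightarrow> \<bar>loss z y - loss z' y\<bar> \<le> \<bar>z - z'\<bar>"
    and dloss_subgrad: "\<And>y z w. y \<in> Y \<Longrightarrow> loss w y \<ge> loss z y + dloss z y * (w - z)"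
    and beta_nonneg: "beta \<ge> 0" and L_nonneg: "L \<ge> 0"
    and hess_bound: "\<And>theta delta. theta \<in> Theta0 \<Longrightarrow> delta \<in> C \<Longrightarrow>
        (1 / real n) * (\<Sum>i<n. (onorm (\<lambda>h. Hg (theta + delta) (xs i) *v h))\<^sup>2) \<le> beta\<^sup>2"
    and grad_bound: "\<And>theta. theta \<in> Theta0 \<Longrightarrow>
        (1 / real n) * (\<Sum>i<n. (norm (Dg theta (xs i)))\<^sup>2) \<le> L\<^sup>2"
    and T_pos: "T > 0"
  shows "\<forall>delta\<in>C.
     Min ((\<lambda>s. emp_loss loss n xs ys
              (g (theta0 + pgd P (1 / sqrt (real T) * (R / sqrt (L\<^sup>2 + beta\<^sup>2 * R\<^sup>2)))
                                  (emp_grad dloss n xs ys g Dg theta0) s))) ` {0..T})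
       - emp_loss loss n xs ys (g (theta0 + delta))
     \<le> beta * R\<^sup>2 + R * sqrt ((L\<^sup>2 + beta\<^sup>2 * R\<^sup>2) / real T)"
proof -
  have dloss_le: "\<bar>dloss z (ys i)\<bar> \<le> 1" if "i < n" for i z
  proof (rule abs_subgradient_le[where l = "\<lambda>z. loss z (ys i)"])
    have "ys i \<in> Y"
      using samples[OF that] by simp
    then show "\<bar>loss z' (ys i) - loss z'' (ys i)\<bar> \<le> 1 * \<bar>z' - z''\<bar>"
      and "loss w (ys i) \<ge> loss z (ys i) + dloss z (ys i) * (w - z)" for z' z'' w
      by (simp_all add: loss_lipschitz dloss_subgrad)
  qed
  have grad_g': "((\<lambda>t. g t (xs i)) has_derivative (\<lambda>h. Dg t (xs i) \<bullet> h)) (at t)"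
    and hess_g': "((\<lambda>t. Dg t (xs i)) has_derivative (\<lambda>h. Hg t (xs i) *v h)) (at t)"
    if "i < n" for i t
    using samples[OF that] by (simp_all add: grad_g hess_g)
  have mean_hess: "(1 / real n) * (\<Sum>i<n. onorm (\<lambda>h. Hg (theta0 + d) (xs i) *v h)) \<le> beta"
    if "d \<in> C" for d
    by (rule mean_le_of_mean_square_le[OF hess_bound[OF theta0_in that] beta_nonneg])
  have mean_grad: "(1 / real n) * (\<Sum>i<n. norm (Dg theta0 (xs i))) \<le> L"
    by (rule mean_le_of_mean_square_le[OF grad_bound[OF theta0_in] L_nonneg])
  have weak: "emp_loss loss n xs ys (g (theta0 + delta)) \<ge> emp_loss loss n xs ys (g (theta0 + x))
      + emp_grad dloss n xs ys g Dg theta0 x \<bullet> (delta - x) - beta / 2 * (norm (delta - x))\<^sup>2"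
    if "x \<in> C" "delta \<in> C" for x delta
    using samples dloss_subgrad
    by (intro emp_loss_weakly_convex[where g = g and Dg = Dg and H = "\<lambda>t x h. Hg t x *v h"
          and n = n and xs = xs and ys = ys and loss = loss and dloss = dloss,
          OF C_convex that grad_g' hess_g' mean_hess _ dloss_le]) auto
  have grad: "norm (emp_grad dloss n xs ys g Dg theta0 x) \<le> L + beta * norm x" if "x \<in> C" for x
    by (rule norm_emp_grad_le[where Dg = Dg and H = "\<lambda>t x h. Hg t x *v h" and n = n and xs = xs
          and dloss = dloss, OF C_convex C_zero that hess_g' mean_hess mean_grad dloss_le])
  show ?thesis
    using pgd_min_gap_le[where f = "\<lambda>a. emp_loss loss n xs ys (g (theta0 + a))",
        OF P_proj C_convex C_zero _ C_bounded weak grad beta_nonneg L_nonneg T_pos]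
    by blast
qed

end
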